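(* Suppose the observation probability matrix $P=(p_{ij})$ is correctly specified and the weights are properly assigned, and let $R$ be any symmetric scoring function with a continuous distribution. For a test location $(i_\ast,j_\ast)$ with $(i_\ast,j_\ast)\mid\Omega_{\mathrm{obs}}\sim\mathrm{Unif}(\Omega^c_{\mathrm{obs}})$, the full conformal interval $\widehat{C}$ satisfies $$\mathbb{P}\{X_{i_\ast j_\ast}\in\widehat{C}(i_\ast,j_\ast)\}=\mathbb{P}\{X_{i_\ast j_\ast}\in\widehat{X}_{i_\ast j_\ast}\pm q^\ast_{i_\ast j_\ast}\widehat{\sigma}_{i_\ast j_\ast}\}=\mathbb{P}\{R_{i_\ast j_\ast}\le q^\ast_{i_\ast j_\ast}\}\le1-\alpha+\omega_{\max},$$ where $q^\ast_{i_\ast j_\ast}=\mathrm{Quantile}_{1-\alpha}\big(\sum_{k=1}^{n_{\mathrm{cal}}+1}\omega_{i_kj_k}\delta_{R_{i_kj_k}}\big)$ and $\omega_{\max}=\max_k\omega_{i_kj_k}$.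
   Context: $X\in\mathbb{R}^{d_1\times d_2}$ is fixed. Independent $Z_{ij}\sim\mathrm{Bern}(p_{ij})$ with nonzero $p_{ij}$ define the observed set $\Omega_{\mathrm{obs}}=\{Z_{ij}=1\}$. The calibration points $(i_1,j_1),\ldots,(i_{n_{\mathrm{cal}}},j_{n_{\mathrm{cal}}})$ are the observed indices retained for calibration (uncorrupted observed entries), and $(i_{n_{\mathrm{cal}}+1},j_{n_{\mathrm{cal}}+1})=(i_\ast,j_\ast)$ is the test point. Properly assigned weights: $\omega_{i_kj_k}=h_{i_kj_k}/\sum_{k'=1}^{n_{\mathrm{cal}}+1}h_{i_{k'}j_{k'}}$, $h_{ij}=(1-p_{ij})/p_{ij}$. $\widehat{X}$ and $\widehat{\sigma}_{ij}>0$ are estimates and the score is $R_{ij}=|X_{ij}-\widehat{X}_{ij}|/\widehat{\sigma}_{ij}$, computed symmetrically in the $n_{\mathrm{cal}}+1$ points. $\mathrm{Quantile}_{1-\alpha}(\mu)=\inf\{t:\mu((-\infty,t])\ge1-\alpha\}$ for a discrete probability measure $\mu$; $\delta_t$ is the point mass at $t$; $\widehat{C}(i_\ast,j_\ast)=[\widehat{X}_{i_\ast j_\ast}-q^\ast_{i_\ast j_\ast}\widehat{\sigma}_{i_\ast j_\ast},\widehat{X}_{i_\ast j_\ast}+q^\ast_{i_\ast j_\ast}\widehat{\sigma}_{i_\ast j_\ast}]$. *)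

theory Defs
  imports "HOL-Probability.Probability"
begin

definition grid :: "nat \<Rightarrow> nat \<Rightarrow> (nat \<times> nat) set" where
  "grid d1 d2 = {..<d1} \<times> {..<d2}"

definition obs_pmf :: "(nat \<times> nat) set \<Rightarrow> (nat \<times> nat \<Rightarrow> real) \<Rightarrow> (nat \<times> nat) set pmf" where
  "obs_pmf I p = map_pmf (\<lambda>Z. {ij \<in> I. Z ij}) (Pi_pmf I False (\<lambda>ij. bernoulli_pmf (p ij)))"

text \<open>Joint law of (Omega_obs, test point): the test point given Omega_obs is uniform on the
  unobserved entries (conditioning on there being at least one unobserved entry, so that
  a test point exists).\<close>
definition obs_test_pmf ::
  "(nat \<times> nat) set \<Rightarrow> (nat \<times> nat \<Rightarrow> real) \<Rightarrow> ((nat \<times> nat) set \<times> (nat \<times> nat)) pmf" where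
  "obs_test_pmf I p =
     cond_pmf (obs_pmf I p) {S. I - S \<noteq> {}} \<bind> (\<lambda>S. pmf_of_set (I - S) \<bind> (\<lambda>t. return_pmf (S, t)))"

definition odds :: "(nat \<times> nat \<Rightarrow> real) \<Rightarrow> nat \<times> nat \<Rightarrow> real" where
  "odds p ij = (1 - p ij) / p ij"

text \<open>Properly assigned weights on the n_cal + 1 points T (calibration points and test point).\<close>
definition cweight :: "(nat \<times> nat \<Rightarrow> real) \<Rightarrow> (nat \<times> nat) set \<Rightarrow> nat \<times> nat \<Rightarrow> real" where
  "cweight p T ij = odds p ij / (\<Sum>k\<in>T. odds p k)"

text \<open>Quantile_{1-alpha} of the discrete measure sum_{k in T} w k * delta_{r k}:
  inf {t. mu((-inf, t]) >= 1 - alpha}.\<close>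
definition wquantile :: "real \<Rightarrow> ('a \<Rightarrow> real) \<Rightarrow> ('a \<Rightarrow> real) \<Rightarrow> 'a set \<Rightarrow> real" where
  "wquantile \<alpha> w r T = Inf {t. (\<Sum>k\<in>{k\<in>T. r k \<le> t}. w k) \<ge> 1 - \<alpha>}"

end

theory Submission
  imports Defs
begin

(* Write T for the observed set together with the test point t. Since the observed set is a
   product of Bernoulli variables and t is uniform on the unobserved entries, the probability of
   (T - {t}, t) is a function of T times the odds (1 - p t) / p t. Hence, given T, the test point
   is drawn from the properly assigned weights on T, and the coverage event has conditional
   probability equal to the weight of {k \<in> T. R k \<le> q(T)}. The weight strictly below the
   quantile is less than 1 - \<alpha>, and without ties at most one point, of weight at most
   \<omega>_max, sits at the quantile; averaging over T gives the bound. *)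

(* Below the quantile the weight is less than 1 - \<alpha> by minimality of the infimum; by
   injectivity of r at most one point sits at the quantile itself. *)
lemma wquantile_mass_le:
  fixes w r :: "'a \<Rightarrow> real"
  assumes fin: "finite T" and ne: "T \<noteq> {}" and w_nonneg: "\<And>k. k \<in> T \<Longrightarrow> 0 \<le> w k"
    and inj: "inj_on r T" and \<alpha>: "0 < \<alpha>" "\<alpha> < 1"
  shows "sum w {k\<in>T. r k \<le> wquantile \<alpha> w r T} \<le> 1 - \<alpha> + Max (w ` T)"
proof -
  define q where "q = wquantile \<alpha> w r T"
  define F where "F x = sum w {k\<in>T. r k \<le> x}" for x
  have below_q: "F x < 1 - \<alpha>" if "x < q" for x
  proof (rule ccontr)
    have "bdd_below {x. F x \<ge> 1 - \<alpha>}"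
    proof (rule bdd_belowI[of _ "Min (r ` T)"])
      fix y assume "y \<in> {x. F x \<ge> 1 - \<alpha>}"
      then have "F y > 0" using \<alpha> by simp
      then have "{k\<in>T. r k \<le> y} \<noteq> {}" unfolding F_def by (metis less_irrefl sum.empty)
      then show "Min (r ` T) \<le> y" using fin by (auto intro: Min.coboundedI[THEN order_trans])
    qed
    moreover assume "\<not> F x < 1 - \<alpha>"
    ultimately have "q \<le> x" unfolding q_def wquantile_def F_def by (auto intro: cInf_lower)
    with that show False by simp
  qed
  have "sum w {k\<in>T. r k < q} \<le> 1 - \<alpha>"
  proof (cases "{k\<in>T. r k < q} = {}")
    case True
    show ?thesis unfolding True using \<alpha> by simp
  next
    case False
    define x where "x = Max (r ` {k\<in>T. r k < q})"
    have "x \<in> r ` {k\<in>T. r k < q}" unfolding x_def using False fin by (intro Max_in) auto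
    then have "x < q" by auto
    moreover have "{k\<in>T. r k \<le> x} = {k\<in>T. r k < q}"
      using \<open>x < q\<close> fin unfolding x_def by (auto intro: Max_ge)
    ultimately show ?thesis using below_q unfolding F_def by fastforce
  qed
  moreover have "sum w {k\<in>T. r k = q} \<le> Max (w ` T)"
  proof (cases "\<exists>k\<in>T. r k = q")
    case True
    then obtain k where k: "k \<in> T" "r k = q" by blast
    with inj have "{k\<in>T. r k = q} = {k}" by (auto simp: inj_on_def)
    with k fin show ?thesis by simp
  next
    case False
    from ne obtain k where "k \<in> T" by blast
    with fin w_nonneg have "0 \<le> Max (w ` T)" by (meson Max_ge finite_imageI image_eqI order_trans)
    moreover have "{k\<in>T. r k = q} = {}" using False by blast
    ultimately show ?thesis by (simp only: sum.empty)
  qed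
  moreover have "sum w {k\<in>T. r k \<le> q} = sum w {k\<in>T. r k < q} + sum w {k\<in>T. r k = q}"
    using fin by (subst sum.union_disjoint[symmetric]) (auto intro!: sum.cong)
  ultimately show ?thesis unfolding q_def by linarith
qed

lemma pmf_map_insert_pair:
  fixes M :: "('a set \<times> 'a) pmf"
  assumes notin: "\<And>S t. (S, t) \<in> set_pmf M \<Longrightarrow> t \<notin> S" and fin: "finite T"
  shows "pmf (map_pmf (\<lambda>(S, t). insert t S) M) T = (\<Sum>t\<in>T. pmf M (T - {t}, t))"
proof -
  let ?ins = "\<lambda>(S, t). insert t S" and ?rem = "\<lambda>t. (T - {t}, t)"
  have preimage: "?ins -` {T} \<inter> set_pmf M = ?rem ` T \<inter> set_pmf M"
  proof (intro equalityI subsetI)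
    fix x assume x: "x \<in> ?ins -` {T} \<inter> set_pmf M"
    obtain S t where [simp]: "x = (S, t)" by fastforce
    from x notin[of S t] have "t \<in> T" "S = T - {t}" by auto
    with x show "x \<in> ?rem ` T \<inter> set_pmf M" by auto
  qed auto
  have "pmf (map_pmf ?ins M) T = measure M (?ins -` {T} \<inter> set_pmf M)"
    unfolding pmf_map by (rule measure_Int_set_pmf[symmetric])
  also have "\<dots> = measure M (?rem ` T)"
    unfolding preimage by (rule measure_Int_set_pmf)
  also have "\<dots> = sum (pmf M) (?rem ` T)"
    using fin by (simp add: measure_measure_pmf_finite)
  also have "\<dots> = (\<Sum>t\<in>T. pmf M (T - {t}, t))"
    by (subst sum.reindex) (auto simp: inj_on_def)
  finally show ?thesis .
qed

lemma integral_sum_Pow_remove: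
  fixes M :: "('a set \<times> 'a) pmf" and g :: "'a set \<times> 'a \<Rightarrow> real"
  assumes fin: "finite I" and supp: "set_pmf M \<subseteq> {(S, t). S \<subseteq> I \<and> t \<in> I - S}"
  shows "measure_pmf.expectation M g = (\<Sum>T\<in>Pow I. \<Sum>t\<in>T. pmf M (T - {t}, t) * g (T - {t}, t))"
proof -
  have "set_pmf M \<subseteq> Sigma (Pow I) (\<lambda>S. I - S)" using supp by auto
  then have "measure_pmf.expectation M g = (\<Sum>x\<in>Sigma (Pow I) (\<lambda>S. I - S). pmf M x * g x)"
    using fin by (subst integral_measure_pmf[where A = "Sigma (Pow I) (\<lambda>S. I - S)"]) auto
  also have "\<dots> = (\<Sum>x\<in>Sigma (Pow I) (\<lambda>T. T). pmf M (fst x - {snd x}, snd x) * g (fst x - {snd x}, snd x))"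
    by (rule sum.reindex_bij_witness[where j = "\<lambda>(S, t). (insert t S, t)" and i = "\<lambda>(T, t). (T - {t}, t)"])
      (force simp: insert_absorb)+
  also have "\<dots> = (\<Sum>T\<in>Pow I. \<Sum>t\<in>T. pmf M (T - {t}, t) * g (T - {t}, t))"
    using fin by (subst sum.Sigma) (auto simp: split_def intro: finite_subset)
  finally show ?thesis .
qed

lemma integral_insert_disintegration:
  fixes M :: "('a set \<times> 'a) pmf" and w f :: "'a set \<Rightarrow> 'a \<Rightarrow> real"
  assumes fin: "finite I" and supp: "set_pmf M \<subseteq> {(S, t). S \<subseteq> I \<and> t \<in> I - S}"
    and cond: "\<And>T t. T \<subseteq> I \<Longrightarrow> t \<in> T \<Longrightarrow>
      pmf M (T - {t}, t) = pmf (map_pmf (\<lambda>(S, t). insert t S) M) T * w T t"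
  shows "measure_pmf.expectation M (\<lambda>(S, t). f (insert t S) t) =
    measure_pmf.expectation (map_pmf (\<lambda>(S, t). insert t S) M) (\<lambda>T. \<Sum>t\<in>T. w T t * f T t)"
proof -
  let ?m = "map_pmf (\<lambda>(S, t). insert t S) M"
  have "measure_pmf.expectation M (\<lambda>(S, t). f (insert t S) t) =
      (\<Sum>T\<in>Pow I. \<Sum>t\<in>T. pmf M (T - {t}, t) * f T t)"
    unfolding integral_sum_Pow_remove[OF fin supp] by (intro sum.cong refl) (simp add: insert_absorb)
  also have "\<dots> = (\<Sum>T\<in>Pow I. pmf ?m T * (\<Sum>t\<in>T. w T t * f T t))"
    by (auto simp: cond sum_distrib_left mult.assoc intro!: sum.cong)
  also have "\<dots> = measure_pmf.expectation ?m (\<lambda>T. \<Sum>t\<in>T. w T t * f T t)"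
    using fin supp by (subst integral_measure_pmf[where A = "Pow I"]) auto
  finally show ?thesis .
qed

lemma prob_insert_disintegration:
  fixes M :: "('a set \<times> 'a) pmf" and w :: "'a set \<Rightarrow> 'a \<Rightarrow> real"
  assumes "finite I" and "set_pmf M \<subseteq> {(S, t). S \<subseteq> I \<and> t \<in> I - S}"
    and "\<And>T t. T \<subseteq> I \<Longrightarrow> t \<in> T \<Longrightarrow>
      pmf M (T - {t}, t) = pmf (map_pmf (\<lambda>(S, t). insert t S) M) T * w T t"
  shows "measure_pmf.prob M {(S, t). P (insert t S) t} =
    measure_pmf.expectation (map_pmf (\<lambda>(S, t). insert t S) M) (\<lambda>T. \<Sum>t\<in>T. w T t * of_bool (P T t))"
proof -
  have "measure_pmf.prob M {(S, t). P (insert t S) t} =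
      measure_pmf.expectation M (indicator {(S, t). P (insert t S) t})"
    by simp
  also have "indicator {(S, t). P (insert t S) t} = (\<lambda>(S, t). of_bool (P (insert t S) t) :: real)"
    by (auto simp: indicator_def)
  also have "measure_pmf.expectation M \<dots> =
      measure_pmf.expectation (map_pmf (\<lambda>(S, t). insert t S) M) (\<lambda>T. \<Sum>t\<in>T. w T t * of_bool (P T t))"
    by (rule integral_insert_disintegration[OF assms])
  finally show ?thesis .
qed

lemma pmf_obs_pmf:
  assumes fin: "finite I" and p01: "\<And>i. i \<in> I \<Longrightarrow> 0 \<le> p i \<and> p i \<le> 1"
  shows "pmf (obs_pmf I p) S = (if S \<subseteq> I then (\<Prod>i\<in>S. p i) * (\<Prod>i\<in>I - S. 1 - p i) else 0)"
proof -
  let ?P = "Pi_pmf I False (\<lambda>i. bernoulli_pmf (p i))"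
  let ?obs = "\<lambda>Z. {i \<in> I. Z i}"
  let ?D = "{Z. \<forall>i. i \<notin> I \<longrightarrow> Z i = False}"
  have "pmf (obs_pmf I p) S = measure ?P (?obs -` {S})"
    unfolding obs_pmf_def by (rule pmf_map)
  also have "\<dots> = measure ?P (?obs -` {S} \<inter> set_pmf ?P)"
    by (simp add: measure_Int_set_pmf)
  also have "?obs -` {S} \<inter> set_pmf ?P = (?obs -` {S} \<inter> ?D) \<inter> set_pmf ?P"
    using set_Pi_pmf_subset[OF fin, of False] by blast
  also have "?obs -` {S} \<inter> ?D = (if S \<subseteq> I then {(\<lambda>i. i \<in> S)} else {})"
    by (auto simp: fun_eq_iff) blast+
  finally have "pmf (obs_pmf I p) S = (if S \<subseteq> I then pmf ?P (\<lambda>i. i \<in> S) else 0)"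
    by (simp add: measure_Int_set_pmf measure_pmf_single)
  also have "\<dots> = (if S \<subseteq> I then (\<Prod>i\<in>I. pmf (bernoulli_pmf (p i)) (i \<in> S)) else 0)"
    using fin by (auto intro!: pmf_Pi')
  also have "\<dots> = (if S \<subseteq> I then (\<Prod>i\<in>S. p i) * (\<Prod>i\<in>I - S. 1 - p i) else 0)"
  proof (cases "S \<subseteq> I")
    case True
    then have "(\<Prod>i\<in>I. pmf (bernoulli_pmf (p i)) (i \<in> S))
        = (\<Prod>i\<in>S. pmf (bernoulli_pmf (p i)) (i \<in> S)) * (\<Prod>i\<in>I - S. pmf (bernoulli_pmf (p i)) (i \<in> S))"
      using fin by (metis (no_types, lifting) mult.commute prod.subset_diff)
    also have "\<dots> = (\<Prod>i\<in>S. p i) * (\<Prod>i\<in>I - S. 1 - p i)"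
      using True p01 by (auto intro!: arg_cong2[where f = "(*)"] prod.cong)
    finally show ?thesis using True by simp
  qed simp
  finally show ?thesis .
qed

lemma pmf_obs_pmf_remove:
  assumes fin: "finite I" and p01: "\<And>i. i \<in> I \<Longrightarrow> 0 < p i \<and> p i \<le> 1"
    and T: "T \<subseteq> I" and t: "t \<in> T"
  shows "pmf (obs_pmf I p) (T - {t}) = pmf (obs_pmf I p) T * odds p t"
proof -
  have p01': "\<And>i. i \<in> I \<Longrightarrow> 0 \<le> p i \<and> p i \<le> 1" using p01 by fastforce
  have "p t \<noteq> 0" using p01 T t by (metis less_irrefl subsetD)
  have "I - (T - {t}) = insert t (I - T)" and "t \<notin> I - T" and "T - {t} \<subseteq> I"
    using T t by auto
  then have "pmf (obs_pmf I p) (T - {t}) = (\<Prod>i\<in>T - {t}. p i) * ((1 - p t) * (\<Prod>i\<in>I - T. 1 - p i))"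
    using fin by (simp add: pmf_obs_pmf[OF fin p01'])
  moreover have "pmf (obs_pmf I p) T = p t * (\<Prod>i\<in>T - {t}. p i) * (\<Prod>i\<in>I - T. 1 - p i)"
    using fin T t by (simp add: pmf_obs_pmf[OF fin p01'] finite_subset prod.remove)
  ultimately show ?thesis using \<open>p t \<noteq> 0\<close> by (simp add: odds_def)
qed

lemma obs_pmf_unobserved_possible:
  assumes fin: "finite I" and p01: "\<And>i. i \<in> I \<Longrightarrow> 0 < p i \<and> p i \<le> 1"
    and "i \<in> I" "p i < 1"
  shows "set_pmf (obs_pmf I p) \<inter> {S. I - S \<noteq> {}} \<noteq> {}"
proof -
  have p01': "\<And>i. i \<in> I \<Longrightarrow> 0 \<le> p i \<and> p i \<le> 1" using p01 by fastforce
  have "I - (I - {i}) = {i}" using assms by auto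
  moreover have "(\<Prod>j\<in>I - {i}. p j) > 0" using p01 by (intro prod_pos) auto
  ultimately have "pmf (obs_pmf I p) (I - {i}) > 0"
    using assms by (simp add: pmf_obs_pmf[OF fin p01'])
  then have "I - {i} \<in> set_pmf (obs_pmf I p)" by (simp add: set_pmf_eq)
  with \<open>I - (I - {i}) = {i}\<close> show ?thesis by blast
qed

lemma pmf_obs_test_pmf:
  assumes fin: "finite I" and pos: "set_pmf (obs_pmf I p) \<inter> {S. I - S \<noteq> {}} \<noteq> {}"
  shows "pmf (obs_test_pmf I p) (S, t) =
    (if t \<in> I - S
     then pmf (obs_pmf I p) S / measure (obs_pmf I p) {S. I - S \<noteq> {}} / card (I - S) else 0)"
proof -
  let ?N = "cond_pmf (obs_pmf I p) {S. I - S \<noteq> {}}"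
  have test_point: "pmf (pmf_of_set (I - S') \<bind> (\<lambda>t. return_pmf (S', t))) (S, t) =
      indicator {S} S' * pmf (pmf_of_set (I - S)) t" for S'
  proof -
    have "pmf (pmf_of_set (I - S') \<bind> (\<lambda>t. return_pmf (S', t))) (S, t)
        = pmf (map_pmf (Pair S') (pmf_of_set (I - S'))) (S, t)"
      by (simp add: map_pmf_def)
    also have "\<dots> = measure (pmf_of_set (I - S')) (Pair S' -` {(S, t)})" by (rule pmf_map)
    also have "Pair S' -` {(S, t)} = (if S' = S then {t} else {})" by auto
    finally show ?thesis by (auto simp: measure_pmf_single)
  qed
  have "pmf (obs_test_pmf I p) (S, t) = (\<integral>S'. indicator {S} S' * pmf (pmf_of_set (I - S)) t \<partial>?N)"
    unfolding obs_test_pmf_def pmf_bind[of ?N] test_point ..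
  also have "\<dots> = pmf ?N S * pmf (pmf_of_set (I - S)) t"
    by (subst integral_measure_pmf[where A = "{S}"]) (auto simp: indicator_def)
  also have "\<dots> = (if t \<in> I - S
      then pmf (obs_pmf I p) S / measure (obs_pmf I p) {S. I - S \<noteq> {}} / card (I - S) else 0)"
    using fin by (subst pmf_cond[OF pos]) auto
  finally show ?thesis .
qed

lemma set_pmf_obs_test_pmf:
  assumes fin: "finite I" and pos: "set_pmf (obs_pmf I p) \<inter> {S. I - S \<noteq> {}} \<noteq> {}"
  shows "set_pmf (obs_test_pmf I p) \<subseteq> {(S, t). S \<subseteq> I \<and> t \<in> I - S}"
proof
  fix x assume "x \<in> set_pmf (obs_test_pmf I p)"
  then obtain S t where x: "x = (S, t)" and S: "S \<in> set_pmf (obs_pmf I p)" "I - S \<noteq> {}"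
    and t: "t \<in> set_pmf (pmf_of_set (I - S))"
    unfolding obs_test_pmf_def set_bind_pmf set_return_pmf set_cond_pmf[OF pos] by blast
  have "S \<subseteq> I" using S unfolding obs_pmf_def by auto
  moreover have "t \<in> I - S" using t fin S by simp
  ultimately show "x \<in> {(S, t). S \<subseteq> I \<and> t \<in> I - S}" using x by simp
qed

lemma pmf_obs_test_pmf_remove:
  assumes fin: "finite I" and p01: "\<And>i. i \<in> I \<Longrightarrow> 0 < p i \<and> p i \<le> 1"
    and pos: "set_pmf (obs_pmf I p) \<inter> {S. I - S \<noteq> {}} \<noteq> {}"
    and T: "T \<subseteq> I" and t: "t \<in> T"
  shows "pmf (obs_test_pmf I p) (T - {t}, t) =
    pmf (obs_pmf I p) T / (measure (obs_pmf I p) {S. I - S \<noteq> {}} * (card (I - T) + 1)) * odds p t"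
proof -
  have "I - (T - {t}) = insert t (I - T)" and "t \<notin> I - T" using T t by auto
  then have "card (I - (T - {t})) = card (I - T) + 1" using fin by simp
  moreover have "t \<in> I - (T - {t})" using T t by auto
  ultimately show ?thesis
    by (simp add: pmf_obs_test_pmf[OF fin pos] pmf_obs_pmf_remove[OF fin p01 T t])
qed

definition cal_test_pmf :: "(nat \<times> nat) set \<Rightarrow> (nat \<times> nat \<Rightarrow> real) \<Rightarrow> (nat \<times> nat) set pmf" where
  "cal_test_pmf I p = map_pmf (\<lambda>(S, t). insert t S) (obs_test_pmf I p)"

lemma set_pmf_cal_test_pmf:
  assumes fin: "finite I" and pos: "set_pmf (obs_pmf I p) \<inter> {S. I - S \<noteq> {}} \<noteq> {}"
  shows "set_pmf (cal_test_pmf I p) \<subseteq> {T. T \<subseteq> I \<and> T \<noteq> {}}"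
  using set_pmf_obs_test_pmf[OF fin pos] unfolding cal_test_pmf_def by auto

lemma odds_nonneg: "0 < p i \<Longrightarrow> p i \<le> 1 \<Longrightarrow> 0 \<le> odds p i"
  by (simp add: odds_def)

lemma pmf_obs_test_pmf_cweight:
  assumes fin: "finite I" and p01: "\<And>i. i \<in> I \<Longrightarrow> 0 < p i \<and> p i \<le> 1"
    and pos: "set_pmf (obs_pmf I p) \<inter> {S. I - S \<noteq> {}} \<noteq> {}"
    and T: "T \<subseteq> I" and t: "t \<in> T"
  shows "pmf (obs_test_pmf I p) (T - {t}, t) = pmf (cal_test_pmf I p) T * cweight p T t"
proof -
  define K where "K = pmf (obs_pmf I p) T / (measure (obs_pmf I p) {S. I - S \<noteq> {}} * (card (I - T) + 1))"
  have remove: "pmf (obs_test_pmf I p) (T - {i}, i) = K * odds p i" if "i \<in> T" for i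
    unfolding K_def using pmf_obs_test_pmf_remove[OF fin p01 pos T that] by simp
  have "finite T" using fin T by (rule finite_subset[rotated])
  moreover have "\<And>S t. (S, t) \<in> set_pmf (obs_test_pmf I p) \<Longrightarrow> t \<notin> S"
    using set_pmf_obs_test_pmf[OF fin pos] by auto
  ultimately have cal: "pmf (cal_test_pmf I p) T = K * sum (odds p) T"
    unfolding cal_test_pmf_def by (simp add: pmf_map_insert_pair remove sum_distrib_left)
  show ?thesis
  proof (cases "sum (odds p) T = 0")
    case True
    moreover have "\<And>i. i \<in> T \<Longrightarrow> 0 \<le> odds p i" using T p01 odds_nonneg by blast
    ultimately have "odds p t = 0" using sum_nonneg_eq_0_iff \<open>finite T\<close> t by blast
    then show ?thesis using remove[OF t] cal True by simp
  next
    case False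
    then show ?thesis using remove[OF t] cal by (simp add: cweight_def)
  qed
qed

lemma cweight_quantile_coverage_le:
  assumes "finite T" and "T \<noteq> {}" and p01: "\<And>i. i \<in> T \<Longrightarrow> 0 < p i \<and> p i \<le> 1"
    and "inj_on r T" and "0 < \<alpha>" "\<alpha> < 1"
  shows "(\<Sum>t\<in>T. cweight p T t * of_bool (r t \<le> wquantile \<alpha> (cweight p T) r T))
    \<le> 1 - \<alpha> + Max (cweight p T ` T)"
proof -
  let ?q = "wquantile \<alpha> (cweight p T) r T"
  have "0 \<le> cweight p T k" if "k \<in> T" for k
    using p01 that odds_nonneg unfolding cweight_def by (metis divide_nonneg_nonneg sum_nonneg)
  then have "sum (cweight p T) {t\<in>T. r t \<le> ?q} \<le> 1 - \<alpha> + Max (cweight p T ` T)"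
    using assms by (intro wquantile_mass_le)
  moreover have "(\<Sum>t\<in>T. cweight p T t * of_bool (r t \<le> ?q)) = sum (cweight p T) {t\<in>T. r t \<le> ?q}"
    unfolding sum.inter_filter[OF \<open>finite T\<close>] by (intro sum.cong) auto
  ultimately show ?thesis by simp
qed

lemma mem_interval_iff_score_le:
  fixes x a q s :: real
  assumes "0 < s"
  shows "x \<in> {a - q * s .. a + q * s} \<longleftrightarrow> \<bar>x - a\<bar> / s \<le> q"
  using assms by (auto simp: pos_divide_le_eq abs_le_iff algebra_simps)

lemma obs_test_pmf_coverage_le:
  fixes R :: "(nat \<times> nat) set \<Rightarrow> nat \<times> nat \<Rightarrow> real"
  assumes fin: "finite I" and p01: "\<And>i. i \<in> I \<Longrightarrow> 0 < p i \<and> p i \<le> 1"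
    and unobserved: "\<exists>i\<in>I. p i < 1" and \<alpha>: "0 < \<alpha>" "\<alpha> < 1"
    and inj: "\<And>T. T \<in> set_pmf (cal_test_pmf I p) \<Longrightarrow> inj_on (R T) T"
  shows "measure_pmf.prob (obs_test_pmf I p)
      {(S, t). R (insert t S) t \<le> wquantile \<alpha> (cweight p (insert t S)) (R (insert t S)) (insert t S)}
    \<le> 1 - \<alpha> + measure_pmf.expectation (obs_test_pmf I p) (\<lambda>(S, t). Max (cweight p (insert t S) ` insert t S))"
proof -
  let ?M = "obs_test_pmf I p" and ?m = "cal_test_pmf I p"
  let ?q = "\<lambda>T. wquantile \<alpha> (cweight p T) (R T) T"
  obtain i where "i \<in> I" "p i < 1" using unobserved ..
  with fin p01 have pos: "set_pmf (obs_pmf I p) \<inter> {S. I - S \<noteq> {}} \<noteq> {}"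
    by (rule obs_pmf_unobserved_possible)
  have "set_pmf ?m \<subseteq> Pow I" using set_pmf_cal_test_pmf[OF fin pos] by auto
  then have finite_m: "finite (set_pmf ?m)" using fin by (meson finite_Pow_iff finite_subset)
  have coverage: "(\<Sum>t\<in>T. cweight p T t * of_bool (R T t \<le> ?q T)) \<le> 1 - \<alpha> + Max (cweight p T ` T)"
    if "T \<in> set_pmf ?m" for T
  proof -
    have "T \<subseteq> I" "T \<noteq> {}" using that set_pmf_cal_test_pmf[OF fin pos] by auto
    then show ?thesis
      using finite_subset[OF \<open>T \<subseteq> I\<close> fin] p01 \<alpha> inj[OF that] by (intro cweight_quantile_coverage_le) auto
  qed
  have "measure_pmf.prob ?M {(S, t). R (insert t S) t \<le> ?q (insert t S)}
      = measure_pmf.expectation ?m (\<lambda>T. \<Sum>t\<in>T. cweight p T t * of_bool (R T t \<le> ?q T))"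
    unfolding cal_test_pmf_def using fin set_pmf_obs_test_pmf[OF fin pos]
    by (rule prob_insert_disintegration)
      (simp add: pmf_obs_test_pmf_cweight[OF fin p01 pos] cal_test_pmf_def)
  also have "\<dots> \<le> measure_pmf.expectation ?m (\<lambda>T. 1 - \<alpha> + Max (cweight p T ` T))"
    using finite_m coverage
    by (intro integral_mono_AE integrable_measure_pmf_finite) (auto simp: AE_measure_pmf_iff)
  also have "\<dots> = 1 - \<alpha> + measure_pmf.expectation ?m (\<lambda>T. Max (cweight p T ` T))"
    using finite_m by (subst Bochner_Integration.integral_add) (auto intro: integrable_measure_pmf_finite)
  also have "measure_pmf.expectation ?m (\<lambda>T. Max (cweight p T ` T))
      = measure_pmf.expectation ?M (\<lambda>(S, t). Max (cweight p (insert t S) ` insert t S))"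
    unfolding cal_test_pmf_def integral_map_pmf by (simp add: case_prod_unfold)
  finally show ?thesis .
qed

theorem lemma4:
  fixes d1 d2 :: nat
    and p :: "nat \<times> nat \<Rightarrow> real"
    and X :: "nat \<times> nat \<Rightarrow> real"
    and Xhat sigmahat :: "(nat \<times> nat) set \<Rightarrow> nat \<times> nat \<Rightarrow> real"
    and \<alpha> :: real
  assumes alpha: "0 < \<alpha>" "\<alpha> < 1"
    and p_pos: "\<And>ij. ij \<in> grid d1 d2 \<Longrightarrow> 0 < p ij"
    and p_le1: "\<And>ij. ij \<in> grid d1 d2 \<Longrightarrow> p ij \<le> 1"
    and unobs_possible: "\<exists>ij \<in> grid d1 d2. p ij < 1"
    and sigma_pos: "\<And>T ij. 0 < sigmahat T ij"
    and continuous: "AE \<omega> in measure_pmf (obs_test_pmf (grid d1 d2) p).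
        (let T = insert (snd \<omega>) (fst \<omega>)
         in inj_on (\<lambda>ij. \<bar>X ij - Xhat T ij\<bar> / sigmahat T ij) T)"
  shows
    "let M = obs_test_pmf (grid d1 d2) p;
         R = (\<lambda>T ij. \<bar>X ij - Xhat T ij\<bar> / sigmahat T ij);
         q = (\<lambda>T. wquantile \<alpha> (cweight p T) (R T) T)
     in measure_pmf.prob M
          {(S, t). X t \<in> {Xhat (insert t S) t - q (insert t S) * sigmahat (insert t S) t ..
                           Xhat (insert t S) t + q (insert t S) * sigmahat (insert t S) t}}
        = measure_pmf.prob M {(S, t). R (insert t S) t \<le> q (insert t S)}
      \<and> measure_pmf.prob M {(S, t). R (insert t S) t \<le> q (insert t S)}
        \<le> 1 - \<alpha> + measure_pmf.expectation M
              (\<lambda>(S, t). Max (cweight p (insert t S) ` insert t S))"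
proof -
  define I where "I = grid d1 d2"
  define R where "R = (\<lambda>T ij. \<bar>X ij - Xhat T ij\<bar> / sigmahat T ij)"
  define q where "q = (\<lambda>T. wquantile \<alpha> (cweight p T) (R T) T)"
  have fin: "finite I" unfolding I_def grid_def by simp
  have p01: "\<And>i. i \<in> I \<Longrightarrow> 0 < p i \<and> p i \<le> 1" using p_pos p_le1 unfolding I_def by blast
  have unobserved: "\<exists>i\<in>I. p i < 1" using unobs_possible unfolding I_def .
  have inj: "inj_on (R T) T" if "T \<in> set_pmf (cal_test_pmf I p)" for T
  proof -
    from that obtain \<omega> where "\<omega> \<in> set_pmf (obs_test_pmf I p)" and "T = insert (snd \<omega>) (fst \<omega>)"
      unfolding cal_test_pmf_def by (auto simp: split_beta)
    with continuous show ?thesis unfolding AE_measure_pmf_iff R_def I_def Let_def by blast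
  qed
  have "{(S, t). X t \<in> {Xhat (insert t S) t - q (insert t S) * sigmahat (insert t S) t ..
                          Xhat (insert t S) t + q (insert t S) * sigmahat (insert t S) t}}
      = {(S, t). R (insert t S) t \<le> q (insert t S)}"
    unfolding R_def using mem_interval_iff_score_le[OF sigma_pos] by auto
  moreover have "measure_pmf.prob (obs_test_pmf I p) {(S, t). R (insert t S) t \<le> q (insert t S)}
      \<le> 1 - \<alpha> + measure_pmf.expectation (obs_test_pmf I p)
            (\<lambda>(S, t). Max (cweight p (insert t S) ` insert t S))"
    unfolding q_def using fin p01 unobserved alpha inj by (rule obs_test_pmf_coverage_le)
  ultimately show ?thesis by (simp only: Let_def I_def R_def q_def)
qed

end
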